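(* Let $G$ be a finite simple graph with at least $3$ vertices, and let $v_1,v_2\in V(G)$ be two leaves of $G$. Then $M_2(G)=M_2(G_{(v_1,v_2)})$.
   Context: A leaf is a vertex with exactly one neighbor. If $v_1,v_2$ are leaves with incident edges $\{w_1,v_1\}$ and $\{w_2,v_2\}$, then $G_{(v_1,v_2)}$ is the graph obtained by identifying $v_1$ and $v_2$ into a single vertex $v_1v_2$: its vertex set is $V(G)\setminus\{v_1,v_2\}\cup\{v_1v_2\}$ and its edge set is $E(G)\setminus\{\{w_1,v_1\},\{w_2,v_2\}\}\cup\{\{w_1,v_1v_2\},\{w_2,v_1v_2\}\}$; edges of $G$ and $G_{(v_1,v_2)}$ are identified in the obvious way. A $2$-matching is a set of edges in which every vertex has degree at most $2$; $M_2(G)$ is the simplicial complex whose vertices are edges of $G$ and whose faces are $2$-matchings of $G$. *)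

theory Defs
  imports Main
begin

definition simple_graph :: "'a set \<Rightarrow> 'a set set \<Rightarrow> bool" where
  "simple_graph V E \<longleftrightarrow> finite V \<and> (\<forall>e\<in>E. e \<subseteq> V \<and> card e = 2)"

definition is_leaf :: "'a set \<Rightarrow> 'a set set \<Rightarrow> 'a \<Rightarrow> bool" where
  "is_leaf V E v \<longleftrightarrow> v \<in> V \<and> card {u. {u, v} \<in> E} = 1"

text \<open>Faces of the 2-matching complex of a (multi)graph whose edges are labelled by the
  set Es, edge e having endpoint set ends e: sets of edges in which every vertex has
  degree at most 2.\<close>
definition two_matching :: "('e \<Rightarrow> 'a set) \<Rightarrow> 'e set \<Rightarrow> 'e set \<Rightarrow> bool" where
  "two_matching ends Es F \<longleftrightarrow> F \<subseteq> Es \<and> (\<forall>x. card {e \<in> F. x \<in> ends e} \<le> 2)"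

definition M2_complex :: "('e \<Rightarrow> 'a set) \<Rightarrow> 'e set \<Rightarrow> 'e set set" where
  "M2_complex ends Es = {F. two_matching ends Es F}"

definition M2 :: "'a set set \<Rightarrow> 'a set set set" where
  "M2 E = M2_complex id E"

text \<open>The vertex map of the identification of v1 and v2; the merged vertex v1v2 is
  named v1 (v1 itself no longer occurs separately).\<close>
definition merge_vertex :: "'a \<Rightarrow> 'a \<Rightarrow> 'a \<Rightarrow> 'a" where
  "merge_vertex v1 v2 x = (if x = v2 then v1 else x)"

text \<open>M_2(G_(v1,v2)): the edges of G_(v1,v2) are identified with those of G; the edge
  labelled e of G has endpoints merge_vertex v1 v2 ` e in G_(v1,v2) (parallel edges
  may arise, so we keep the labels).\<close>
definition M2_identified :: "'a set set \<Rightarrow> 'a \<Rightarrow> 'a \<Rightarrow> 'a set set set" where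
  "M2_identified E v1 v2 = M2_complex (\<lambda>e. merge_vertex v1 v2 ` e) E"

end

theory Submission
  imports Defs
begin

text \<open>Identifying v1 and v2 only changes the degree of the merged vertex, which becomes the
  sum of the degrees of v1 and v2. Leaves have degree at most one, so in any set of edges the
  merged vertex has degree at most two, exactly as v1 and v2 do before the identification.\<close>

lemma leaf_incident_edges:
  assumes "\<forall>e\<in>E. card e = 2" and "is_leaf V E v"
  obtains u where "{e \<in> E. v \<in> e} \<subseteq> {{u, v}}"
proof -
  from assms(2) obtain u where u: "{w. {w, v} \<in> E} = {u}"
    unfolding is_leaf_def by (auto simp: card_1_singleton_iff)
  have "e = {u, v}" if "e \<in> E" "v \<in> e" for e
  proof -
    from that assms(1) obtain a b where "e = {a, b}" "a \<noteq> b"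
      by (meson card_2_iff)
    with \<open>v \<in> e\<close> obtain w where "e = {w, v}" by blast
    with \<open>e \<in> E\<close> u show ?thesis by auto
  qed
  then show thesis using that by blast
qed

lemma mem_merge_vertex_image_outside:
  "x \<notin> {v1, v2} \<Longrightarrow> x \<in> merge_vertex v1 v2 ` e \<longleftrightarrow> x \<in> e"
  by (force simp: merge_vertex_def)

lemma mem_merge_vertex_image_merged:
  "x \<in> {v1, v2} \<Longrightarrow> x \<in> merge_vertex v1 v2 ` e \<Longrightarrow> v1 \<in> e \<or> v2 \<in> e"
  by (auto simp: merge_vertex_def split: if_splits)

lemma card_le_2_if_subset_doubleton:
  assumes "A \<subseteq> {a, b}"
  shows "card A \<le> 2"
proof -
  from assms have "card A \<le> card {a, b}" by (simp add: card_mono)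
  also have "\<dots> \<le> 2" by (cases "a = b") simp_all
  finally show ?thesis .
qed

lemma two_matching_merge_vertex_iff:
  assumes touching: "{e \<in> E. v1 \<in> e \<or> v2 \<in> e} \<subseteq> {a, b}"
  shows "two_matching (\<lambda>e. merge_vertex v1 v2 ` e) E F \<longleftrightarrow> two_matching id E F"
proof -
  have "card {e \<in> F. x \<in> merge_vertex v1 v2 ` e} \<le> 2 \<longleftrightarrow> card {e \<in> F. x \<in> e} \<le> 2"
    if "F \<subseteq> E" for x
  proof (cases "x \<in> {v1, v2}")
    case True
    with that touching mem_merge_vertex_image_merged[OF True]
    have "{e \<in> F. x \<in> merge_vertex v1 v2 ` e} \<subseteq> {a, b}" "{e \<in> F. x \<in> e} \<subseteq> {a, b}"
      by blast+
    then show ?thesis by (simp add: card_le_2_if_subset_doubleton)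
  next
    case False
    then show ?thesis by (simp add: mem_merge_vertex_image_outside)
  qed
  then show ?thesis unfolding two_matching_def by auto
qed

lemma M2_identified_eq_M2:
  assumes "{e \<in> E. v1 \<in> e \<or> v2 \<in> e} \<subseteq> {a, b}"
  shows "M2_identified E v1 v2 = M2 E"
  unfolding M2_identified_def M2_def M2_complex_def
  by (intro Collect_cong two_matching_merge_vertex_iff[OF assms])

theorem mainTheorem12:
  fixes V :: "'a set" and E :: "'a set set" and v1 v2 :: 'a
  assumes "simple_graph V E"
    and "card V \<ge> 3"
    and "is_leaf V E v1" and "is_leaf V E v2"
    and "v1 \<noteq> v2"
  shows "M2 E = M2_identified E v1 v2"
proof -
  have edges: "\<forall>e\<in>E. card e = 2"
    using assms(1) by (simp add: simple_graph_def)
  obtain u1 where u1: "{e \<in> E. v1 \<in> e} \<subseteq> {{u1, v1}}"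
    using leaf_incident_edges[OF edges assms(3)] .
  obtain u2 where u2: "{e \<in> E. v2 \<in> e} \<subseteq> {{u2, v2}}"
    using leaf_incident_edges[OF edges assms(4)] .
  have "{e \<in> E. v1 \<in> e \<or> v2 \<in> e} \<subseteq> {{u1, v1}, {u2, v2}}"
    using u1 u2 by blast
  then show ?thesis by (rule M2_identified_eq_M2[symmetric])
qed

end
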